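(* The disjoint union of finitely many spectrally threshold dominated graphs is spectrally threshold dominated, and the complement of a spectrally threshold dominated graph is spectrally threshold dominated.
   Context: All graphs are finite and simple. For a graph $G$ on $n$ nodes, the Laplacian eigenvalues (eigenvalues of $L(G)=D(G)-A(G)$) are $\lambda_1(G)\ge\dots\ge\lambda_n(G)=0$. A threshold graph is a graph obtainable from the empty graph by repeatedly adding a new node that is either isolated or adjacent to all previously added nodes. A graph $G$ on $n$ nodes with $m$ edges is spectrally threshold dominated if for each $k\in\{1,\dots,n\}$ there is a threshold graph $T_k$ on $n$ nodes with $m$ edges satisfying $\sum_{i=1}^k\lambda_i(T_k)\ge\sum_{i=1}^k\lambda_i(G)$. *)

theory Defs
  imports "Jordan_Normal_Form.Char_Poly"
begin

text \<open>A finite simple graph on the node set {0..<n} is a pair (n, E) with E a symmetric,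
irreflexive adjacency relation that only relates nodes below n.\<close>

type_synonym graph = "nat \<times> (nat \<Rightarrow> nat \<Rightarrow> bool)"

definition wf_graph :: "graph \<Rightarrow> bool" where
  "wf_graph G \<longleftrightarrow> (\<forall>i j. snd G i j \<longrightarrow> i < fst G \<and> j < fst G \<and> i \<noteq> j \<and> snd G j i)"

definition num_edges :: "graph \<Rightarrow> nat" where
  "num_edges G = card {(i, j). i < j \<and> j < fst G \<and> snd G i j}"

definition gdegree :: "graph \<Rightarrow> nat \<Rightarrow> nat" where
  "gdegree G i = card {j. j < fst G \<and> snd G i j}"

definition laplacian :: "graph \<Rightarrow> real mat" where
  "laplacian G = mat (fst G) (fst G)
     (\<lambda>(i, j). if i = j then real (gdegree G i) else if snd G i j then -1 else 0)"

definition lap_eigenvalues :: "graph \<Rightarrow> real list" where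
  "lap_eigenvalues G = (THE xs. length xs = fst G \<and> sorted_wrt (\<ge>) xs \<and>
      char_poly (laplacian G) = prod_list (map (\<lambda>a. [:-a, 1:]) xs))"

definition lap_eigsum :: "graph \<Rightarrow> nat \<Rightarrow> real" where
  "lap_eigsum G k = sum_list (take k (lap_eigenvalues G))"

text \<open>Threshold graphs built in canonical node order: the node added at step n gets label n.\<close>
inductive threshold_canon :: "graph \<Rightarrow> bool" where
  empty: "threshold_canon (0, \<lambda>_ _. False)"
| add_isolated: "threshold_canon (n, E) \<Longrightarrow> threshold_canon (Suc n, E)"
| add_dominating: "threshold_canon (n, E) \<Longrightarrow>
     threshold_canon (Suc n, \<lambda>i j. E i j \<or> (i = n \<and> j < n) \<or> (j = n \<and> i < n))"

definition is_threshold :: "graph \<Rightarrow> bool" where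
  "is_threshold G \<longleftrightarrow> wf_graph G \<and> (\<exists>T p. threshold_canon T \<and> fst T = fst G \<and>
      bij_betw p {..<fst G} {..<fst G} \<and>
      (\<forall>i<fst G. \<forall>j<fst G. snd G i j \<longleftrightarrow> snd T (p i) (p j)))"

definition spectrally_threshold_dominated :: "graph \<Rightarrow> bool" where
  "spectrally_threshold_dominated G \<longleftrightarrow>
     (\<forall>k \<in> {1..fst G}. \<exists>T. is_threshold T \<and> fst T = fst G \<and> num_edges T = num_edges G \<and>
        lap_eigsum T k \<ge> lap_eigsum G k)"

definition disjoint_union :: "graph \<Rightarrow> graph \<Rightarrow> graph" where
  "disjoint_union G H = (fst G + fst H, \<lambda>i j.
      (i < fst G \<and> j < fst G \<and> snd G i j) \<or>
      (fst G \<le> i \<and> fst G \<le> j \<and> snd H (i - fst G) (j - fst G)))"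

definition disjoint_union_list :: "graph list \<Rightarrow> graph" where
  "disjoint_union_list Gs = foldr disjoint_union Gs (0, \<lambda>_ _. False)"

definition complement :: "graph \<Rightarrow> graph" where
  "complement G = (fst G, \<lambda>i j. i < fst G \<and> j < fst G \<and> i \<noteq> j \<and> \<not> snd G i j)"

end

theory Submission
  imports Defs
begin

text \<open>Write \<open>S\<^sub>k(G)\<close> for the sum of the \<open>k\<close> largest Laplacian eigenvalues of a graph with \<open>n\<close>
  nodes and \<open>m\<close> edges. Always \<open>S\<^sub>k \<le> 2m\<close> (the trace) and \<open>S\<^sub>k \<le> kn\<close> (no eigenvalue exceeds \<open>n\<close>),
  and threshold graphs, hence all spectrally threshold dominated graphs, satisfy Brouwer's bound
  \<open>2 S\<^sub>k \<le> 2m + k(k+1)\<close>. Conversely, adding isolated or dominating nodes greedily yields a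
  threshold graph with \<open>2 S\<^sub>k \<ge> min (4m) (2m + k(k+1)) (2kn)\<close>. The spectrum of a disjoint union is
  the union of the spectra, so its \<open>S\<^sub>k\<close> is at most \<open>S\<^sub>k\<^sub>1 + S\<^sub>k\<^sub>2\<close> of the parts for some
  \<open>k\<^sub>1 + k\<^sub>2 = k\<close>, and the three bounds add up. For the complement,
  \<open>S\<^sub>k = kn - 2m + S\<^sub>n\<^sub>-\<^sub>1\<^sub>-\<^sub>k(G)\<close> when \<open>k < n\<close>, and threshold graphs are closed under
  complementation.\<close>

section \<open>Graphs and their Laplacians\<close>

lemma wf_graph_sym: "wf_graph G \<Longrightarrow> snd G i j = snd G j i"
  unfolding wf_graph_def by blast

lemma wf_graph_irrefl: "wf_graph G \<Longrightarrow> \<not> snd G i i"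
  unfolding wf_graph_def by blast

lemma wf_graph_nodes: "wf_graph G \<Longrightarrow> snd G i j \<Longrightarrow> i < fst G \<and> j < fst G"
  unfolding wf_graph_def by blast

lemma laplacian_carrier [simp]: "laplacian G \<in> carrier_mat (fst G) (fst G)"
  unfolding laplacian_def by auto

lemma laplacian_dim [simp]: "dim_row (laplacian G) = fst G" "dim_col (laplacian G) = fst G"
  unfolding laplacian_def by auto

lemma laplacian_index: "i < fst G \<Longrightarrow> j < fst G \<Longrightarrow> laplacian G $$ (i,j) =
   (if i = j then real (gdegree G i) else if snd G i j then -1 else 0)"
  unfolding laplacian_def by auto

lemma gdegree_eq_sum: "real (gdegree G i) = (\<Sum>j<fst G. if snd G i j then 1 else 0)"
proof -
  have "(\<Sum>j<fst G. (if snd G i j then 1 else 0::real)) = real (card ({..<fst G} \<inter> {j. snd G i j}))"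
    by (simp add: sum.If_cases)
  also have "{..<fst G} \<inter> {j. snd G i j} = {j. j < fst G \<and> snd G i j}" by auto
  finally show ?thesis unfolding gdegree_def by simp
qed

lemma laplacian_row_sum:
  assumes wf: "wf_graph G" and i: "i < fst G"
  shows "(\<Sum>j<fst G. laplacian G $$ (i,j)) = 0"
proof -
  have "(\<Sum>j<fst G. laplacian G $$ (i,j))
      = (\<Sum>j<fst G. (if j = i then real (gdegree G i) else 0) - (if snd G i j then 1 else 0))"
    by (intro sum.cong refl) (auto simp: laplacian_index i wf_graph_irrefl[OF wf])
  also have "\<dots> = real (gdegree G i) - (\<Sum>j<fst G. if snd G i j then 1 else 0)"
    using i by (simp add: sum_subtractf)
  finally show ?thesis using gdegree_eq_sum[of G i] by simp
qed

lemma sum_gdegree: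
  assumes wf: "wf_graph G"
  shows "(\<Sum>i<fst G. gdegree G i) = 2 * num_edges G"
proof -
  let ?n = "fst G" and ?E = "snd G"
  define P where "P = (SIGMA i:{..<?n}. {j. j < ?n \<and> ?E i j})"
  define P1 where "P1 = {(i,j). i < j \<and> j < ?n \<and> ?E i j}"
  define P2 where "P2 = {(i,j). j < i \<and> i < ?n \<and> ?E i j}"
  have sum_P: "(\<Sum>i<?n. gdegree G i) = card P"
    unfolding P_def gdegree_def by (subst card_SigmaI) auto
  have "P1 \<subseteq> {..<?n} \<times> {..<?n}" "P2 \<subseteq> {..<?n} \<times> {..<?n}" unfolding P1_def P2_def by auto
  then have fin: "finite P1" "finite P2" using finite_subset by blast+
  have "P = P1 \<union> P2" unfolding P_def P1_def P2_def using wf_graph_irrefl[OF wf]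
    by auto (metis nat_neq_iff)
  moreover have "P1 \<inter> P2 = {}" unfolding P1_def P2_def by auto
  moreover have "P2 = prod.swap ` P1" unfolding P1_def P2_def using wf_graph_sym[OF wf]
    by (auto simp: image_iff)
  then have "card P2 = card P1" by (simp add: card_image)
  ultimately have "card P = 2 * card P1" using card_Un_disjoint[OF fin] by simp
  moreover have "num_edges G = card P1" unfolding num_edges_def P1_def by simp
  ultimately show ?thesis using sum_P by simp
qed

section \<open>Products of linear factors\<close>

abbreviation lin_factors :: "'a::comm_ring_1 list \<Rightarrow> 'a poly" where
  "lin_factors xs \<equiv> (\<Prod>a\<leftarrow>xs. [:- a, 1:])"

lemma lin_factors_mset_cong: "mset xs = mset ys \<Longrightarrow> lin_factors xs = lin_factors ys"
  by (metis mset_map prod_mset_prod_list)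

lemma degree_lin_factors: "degree (lin_factors (xs :: 'a::idom list)) = length xs"
  using degree_linear_factors[of uminus xs] by simp

lemma lin_factors_eq_iff_mset:
  fixes xs ys :: "'a::field list"
  shows "lin_factors xs = lin_factors ys \<longleftrightarrow> mset xs = mset ys"
proof
  show "lin_factors xs = lin_factors ys \<Longrightarrow> mset xs = mset ys"
  proof (induction xs arbitrary: ys)
    case Nil
    then show ?case using degree_lin_factors[of ys] by simp
  next
    case (Cons x xs)
    have "poly (lin_factors ys) x = 0" unfolding Cons.prems[symmetric] by simp
    then have x: "x \<in> set ys" by (auto simp: poly_prod_list_zero_iff)
    then have "[:- x, 1:] * lin_factors xs = [:- x, 1:] * lin_factors (remove1 x ys)"
      using Cons.prems lin_factors_mset_cong[of ys "x # remove1 x ys"] by (simp del: mult_pCons_left)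
    then have "lin_factors xs = lin_factors (remove1 x ys)"
      by (subst (asm) mult_left_cancel) simp_all
    then show ?case using Cons.IH x by simp
  qed
qed (rule lin_factors_mset_cong)

lemma sorted_desc_mset_unique:
  fixes xs ys :: "'a::linorder list"
  assumes "sorted_wrt (\<ge>) xs" "sorted_wrt (\<ge>) ys" "mset xs = mset ys"
  shows "xs = ys"
proof -
  have "sorted (rev xs)" "sorted (rev ys)" unfolding sorted_wrt_rev using assms by simp_all
  moreover have "mset (rev xs) = mset (rev ys)" using assms by simp
  ultimately have "rev xs = rev ys" using sorted_sort_id properties_for_sort by metis
  then show ?thesis by simp
qed

lemma coeff_lin_factors_length: "coeff (lin_factors (xs :: 'a::idom list)) (length xs) = 1"
proof -
  have "lead_coeff (lin_factors xs) = 1"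
    by (induction xs) (simp_all add: lead_coeff_mult del: mult_pCons_left)
  then show ?thesis using degree_lin_factors[of xs] by simp
qed

lemma coeff_lin_factors_sum:
  fixes xs :: "'a::idom list"
  shows "coeff (lin_factors (x # xs)) (length xs) = - sum_list (x # xs)"
proof (induction xs arbitrary: x)
  case (Cons y ys)
  have "coeff (lin_factors (x # y # ys)) (length (y # ys))
      = - x * coeff (lin_factors (y # ys)) (length (y # ys)) + coeff (lin_factors (y # ys)) (length ys)"
    by (simp add: algebra_simps)
  then show ?case using coeff_lin_factors_length[of "y # ys"] Cons.IH[of y] by simp
qed simp

section \<open>The Laplacian spectrum\<close>

lemma laplacian_quadratic_form:
  fixes f :: "nat \<Rightarrow> complex" and E :: "nat \<Rightarrow> nat \<Rightarrow> bool"
  assumes sym: "\<And>i j. E i j = E j i"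
  shows "2 * (\<Sum>i<n. cnj (f i) * (of_nat (card {j. j < n \<and> E i j}) * f i - (\<Sum>j<n. if E i j then f j else 0)))
       = (\<Sum>i<n. \<Sum>j<n. if E i j then (f i - f j) * cnj (f i - f j) else 0)"
proof -
  have deg: "of_nat (card {j. j < n \<and> E i j}) = (\<Sum>j<n. if E i j then 1 else (0::complex))" for i
  proof -
    have "(\<Sum>j<n. (if E i j then 1 else 0::complex)) = of_nat (card ({..<n} \<inter> {j. E i j}))"
      by (simp add: sum.If_cases)
    also have "{..<n} \<inter> {j. E i j} = {j. j < n \<and> E i j}" by auto
    finally show ?thesis by simp
  qed
  define A where "A = (\<Sum>i<n. \<Sum>j<n. if E i j then f i * cnj (f i) else 0)"
  define B where "B = (\<Sum>i<n. \<Sum>j<n. if E i j then f j * cnj (f i) else 0)"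
  have A_swap: "(\<Sum>i<n. \<Sum>j<n. if E i j then f j * cnj (f j) else 0) = A"
    unfolding A_def by (subst sum.swap) (simp add: sym)
  have B_swap: "(\<Sum>i<n. \<Sum>j<n. if E i j then f i * cnj (f j) else 0) = B"
    unfolding B_def by (subst sum.swap) (simp add: sym)
  have "(\<Sum>i<n. \<Sum>j<n. if E i j then (f i - f j) * cnj (f i - f j) else 0)
      = (\<Sum>i<n. \<Sum>j<n. (if E i j then f i * cnj (f i) else 0) + (if E i j then f j * cnj (f j) else 0)
           - (if E i j then f i * cnj (f j) else 0) - (if E i j then f j * cnj (f i) else 0))"
    by (intro sum.cong refl) (auto simp: algebra_simps)
  also have "\<dots> = 2 * (A - B)"
    unfolding A_def B_def by (simp add: sum_subtractf sum.distrib A_swap[unfolded A_def] B_swap[unfolded B_def])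
  finally have rhs: "(\<Sum>i<n. \<Sum>j<n. if E i j then (f i - f j) * cnj (f i - f j) else 0) = 2 * (A - B)" .
  have "(\<Sum>i<n. cnj (f i) * (of_nat (card {j. j < n \<and> E i j}) * f i - (\<Sum>j<n. if E i j then f j else 0)))
     = A - B"
    unfolding A_def B_def deg
    by (simp add: sum_subtractf sum_distrib_left sum_distrib_right algebra_simps if_distrib cong: if_cong)
  with rhs show ?thesis by simp
qed

lemma laplacian_mult_vec_index:
  fixes v :: "complex vec"
  assumes wf: "wf_graph G" and v: "v \<in> carrier_vec (fst G)" and i: "i < fst G"
  shows "(map_mat complex_of_real (laplacian G) *\<^sub>v v) $ i =
     of_nat (card {j. j < fst G \<and> snd G i j}) * v $ i - (\<Sum>j<fst G. if snd G i j then v $ j else 0)"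
proof -
  have "(map_mat complex_of_real (laplacian G) *\<^sub>v v) $ i
      = (\<Sum>j<fst G. complex_of_real (laplacian G $$ (i,j)) * v $ j)"
    using i v by (simp add: scalar_prod_def row_def lessThan_atLeast0)
  also have "\<dots> = (\<Sum>j<fst G. (if j = i then of_nat (card {j. j < fst G \<and> snd G i j}) * v $ i else 0)
        - (if snd G i j then v $ j else 0))"
    by (intro sum.cong refl) (auto simp: laplacian_index i gdegree_def wf_graph_irrefl[OF wf])
  finally show ?thesis using i by (simp add: sum_subtractf)
qed

text \<open>For an eigenvector \<open>v\<close> to \<open>a\<close>, the quadratic form identity says that \<open>2 a\<close> times the
  squared norm of \<open>v\<close> is the sum of \<open>|v i - v j|\<^sup>2\<close> over adjacent \<open>i\<close>, \<open>j\<close>.\<close>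

lemma laplacian_eigenvalue_nonneg_real:
  assumes wf: "wf_graph G" and ev: "eigenvalue (map_mat complex_of_real (laplacian G)) a"
  shows "\<exists>r\<ge>0. a = of_real r"
proof -
  let ?n = "fst G" and ?E = "snd G"
  let ?L = "map_mat complex_of_real (laplacian G)"
  obtain v where "eigenvector ?L v a" using ev unfolding eigenvalue_def by auto
  then have vc: "v \<in> carrier_vec ?n" and v0: "v \<noteq> 0\<^sub>v ?n" and Lv: "?L *\<^sub>v v = a \<cdot>\<^sub>v v"
    unfolding eigenvector_def by auto
  have comp: "a * v $ i = of_nat (card {j. j < ?n \<and> ?E i j}) * v $ i - (\<Sum>j<?n. if ?E i j then v $ j else 0)"
    if "i < ?n" for i
    using laplacian_mult_vec_index[OF wf vc that] arg_cong[OF Lv, of "\<lambda>w. w $ i"] that vc by simp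
  define S where "S = (\<Sum>i<?n. (cmod (v $ i))\<^sup>2)"
  define R where "R = (\<Sum>i<?n. \<Sum>j<?n. if ?E i j then (cmod (v $ i - v $ j))\<^sup>2 else 0)"
  have "S > 0"
  proof -
    from v0 vc obtain i where i: "i < ?n" "v $ i \<noteq> 0"
      by (metis carrier_vecD eq_vecI index_zero_vec(1) index_zero_vec(2))
    have "(cmod (v $ i))\<^sup>2 \<le> S" unfolding S_def by (rule member_le_sum) (use i in auto)
    then show ?thesis using i by (smt (verit) zero_less_norm_iff zero_less_power)
  qed
  have "R \<ge> 0" unfolding R_def by (intro sum_nonneg) auto
  have "2 * (\<Sum>i<?n. cnj (v $ i) * (a * v $ i))
      = (\<Sum>i<?n. \<Sum>j<?n. if ?E i j then (v $ i - v $ j) * cnj (v $ i - v $ j) else 0)"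
    using laplacian_quadratic_form[of ?E "\<lambda>i. v $ i" ?n] wf_graph_sym[OF wf] comp by simp
  also have "\<dots> = of_real R" unfolding R_def of_real_sum
    by (intro sum.cong refl) (auto simp: complex_norm_square[symmetric] simp del: complex_cnj_diff)
  finally have "2 * (\<Sum>i<?n. cnj (v $ i) * (a * v $ i)) = of_real R" .
  moreover have "(\<Sum>i<?n. cnj (v $ i) * (a * v $ i)) = a * of_real S" unfolding S_def of_real_sum sum_distrib_left
    by (intro sum.cong refl) (auto simp: complex_norm_square[symmetric] algebra_simps)
  ultimately have "a = of_real (R / (2 * S))" using \<open>S > 0\<close> by (simp add: field_simps)
  then show ?thesis using \<open>R \<ge> 0\<close> \<open>S > 0\<close> by (intro exI[of _ "R / (2 * S)"]) auto
qed

lemma char_poly_laplacian_factorization: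
  assumes wf: "wf_graph G"
  shows "\<exists>xs. length xs = fst G \<and> sorted_wrt (\<ge>) xs \<and> char_poly (laplacian G) = lin_factors xs
     \<and> (\<forall>a\<in>set xs. a \<ge> 0)"
proof -
  let ?n = "fst G" and ?L = "laplacian G"
  let ?Lc = "map_mat complex_of_real ?L"
  have Lc: "?Lc \<in> carrier_mat ?n ?n" by simp
  obtain cs where cs: "char_poly ?Lc = lin_factors cs" "length cs = ?n"
    using char_poly_factorized[OF Lc] by blast
  have real: "\<exists>r\<ge>0. c = complex_of_real r" if "c \<in> set cs" for c
  proof -
    have "poly (char_poly ?Lc) c = 0" unfolding cs(1) poly_prod_list_zero_iff using that by auto
    then have "eigenvalue ?Lc c" using eigenvalue_root_char_poly[OF Lc] by simp
    then show ?thesis by (rule laplacian_eigenvalue_nonneg_real[OF wf])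
  qed
  define rs where "rs = map Re cs"
  have cs_rs: "cs = map complex_of_real rs"
    unfolding rs_def by (rule nth_equalityI) (use real nth_mem in fastforce)+
  interpret mp: map_poly_inj_comm_ring_hom complex_of_real ..
  have "map_poly complex_of_real (char_poly ?L) = char_poly ?Lc"
    by (rule of_real_hom.char_poly_hom[OF laplacian_carrier, symmetric])
  also have "\<dots> = map_poly complex_of_real (lin_factors rs)"
    unfolding cs(1) cs_rs mp.hom_prod_list map_map o_def
    by (simp add: of_real_hom.map_poly_pCons_hom)
  finally have "char_poly ?L = lin_factors rs" by simp
  moreover have "lin_factors rs = lin_factors (rev (sort rs))" by (rule lin_factors_mset_cong) simp
  moreover have "\<forall>a\<in>set rs. a \<ge> 0" unfolding rs_def using real by fastforce
  ultimately show ?thesis using cs(2) cs_rs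
    by (intro exI[of _ "rev (sort rs)"]) (simp add: sorted_wrt_rev)
qed

lemma lap_eigenvalues_eqI:
  assumes "wf_graph G" "sorted_wrt (\<ge>) xs" "char_poly (laplacian G) = lin_factors xs"
  shows "lap_eigenvalues G = xs"
proof -
  have unique: "zs = xs" if "sorted_wrt (\<ge>) zs" "char_poly (laplacian G) = lin_factors zs" for zs
    using sorted_desc_mset_unique[OF that(1) assms(2)] that(2) assms(3) lin_factors_eq_iff_mset by metis
  obtain ys where "length ys = fst G" "sorted_wrt (\<ge>) ys" "char_poly (laplacian G) = lin_factors ys"
    using char_poly_laplacian_factorization[OF assms(1)] by blast
  then have "length xs = fst G" using unique by blast
  then show ?thesis unfolding lap_eigenvalues_def using assms(2,3) unique by (intro the_equality) blast+
qed

lemma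
  assumes "wf_graph G"
  shows length_lap_eigenvalues: "length (lap_eigenvalues G) = fst G"
    and sorted_lap_eigenvalues: "sorted_wrt (\<ge>) (lap_eigenvalues G)"
    and char_poly_laplacian: "char_poly (laplacian G) = lin_factors (lap_eigenvalues G)"
    and lap_eigenvalues_nonneg: "a \<in> set (lap_eigenvalues G) \<Longrightarrow> a \<ge> 0"
proof -
  obtain xs where xs: "length xs = fst G" "sorted_wrt (\<ge>) xs" "char_poly (laplacian G) = lin_factors xs"
     "\<forall>a\<in>set xs. a \<ge> 0"
    using char_poly_laplacian_factorization[OF assms] by blast
  moreover have "lap_eigenvalues G = xs" using lap_eigenvalues_eqI[OF assms xs(2,3)] .
  ultimately show "length (lap_eigenvalues G) = fst G" "sorted_wrt (\<ge>) (lap_eigenvalues G)"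
    "char_poly (laplacian G) = lin_factors (lap_eigenvalues G)"
    "a \<in> set (lap_eigenvalues G) \<Longrightarrow> a \<ge> 0" by auto
qed

section \<open>Trace and edge count\<close>

definition mat_trace :: "'a::comm_ring_1 mat \<Rightarrow> 'a" where
  "mat_trace A = (\<Sum>i<dim_row A. A $$ (i,i))"

lemma mat_trace_mat_delete:
  assumes A: "A \<in> carrier_mat (Suc m) (Suc m)" and i: "i < Suc m"
  shows "mat_trace (mat_delete A i i) = mat_trace A - A $$ (i,i)"
proof -
  have "mat_trace (mat_delete A i i) = (\<Sum>k\<in>{0..<m}. A $$ (insert_index i k, insert_index i k))"
    unfolding mat_trace_def mat_delete_def using A by (simp add: insert_index_def lessThan_atLeast0)
  also have "\<dots> = (\<Sum>j\<in>insert_index i ` {0..<m}. A $$ (j,j))"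
    by (rule sum.reindex[symmetric, unfolded o_def]) (rule insert_index_inj_on)
  also have "insert_index i ` {0..<m} = {0..<Suc m} - {i}" by (rule insert_index_image[OF i])
  also have "(\<Sum>j\<in>{0..<Suc m} - {i}. A $$ (j,j)) = (\<Sum>j\<in>{0..<Suc m}. A $$ (j,j)) - A $$ (i,i)"
    using i by (simp add: sum_diff1)
  finally show ?thesis unfolding mat_trace_def using A by (simp add: lessThan_atLeast0)
qed

text \<open>Induction on the dimension, comparing coefficients in the expansion of the derivative of
  the characteristic polynomial as a sum over principal minors.\<close>

lemma coeff_char_poly_mat_trace:
  fixes A :: "'a::field_char_0 mat"
  assumes "A \<in> carrier_mat (Suc m) (Suc m)"
  shows "coeff (char_poly A) m = - mat_trace A"
  using assms
proof (induction m arbitrary: A)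
  case 0
  have "upper_triangular A" using 0 unfolding upper_triangular_def by auto
  then have "char_poly A = (\<Prod>a\<leftarrow>diag_mat A. [:- a, 1:])"
    by (rule char_poly_upper_triangular[OF 0])
  moreover have "diag_mat A = [A $$ (0,0)]" using 0 unfolding diag_mat_def by (simp add: upt_rec)
  ultimately show ?case using 0 unfolding mat_trace_def by simp
next
  case (Suc m)
  note A = Suc.prems
  have minor: "coeff (char_poly (mat_delete A i i)) m = - (mat_trace A - A $$ (i,i))"
    if "i < Suc (Suc m)" for i
  proof -
    have "mat_delete A i i \<in> carrier_mat (Suc m) (Suc m)" using mat_delete_carrier[OF A] by simp
    from Suc.IH[OF this] show ?thesis using mat_trace_mat_delete[OF A that] by simp
  qed
  have "of_nat (Suc m) * coeff (char_poly A) (Suc m) = coeff (pderiv (char_poly A)) m"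
    by (rule coeff_pderiv[symmetric])
  also have "\<dots> = (\<Sum>i < Suc (Suc m). coeff (char_poly (mat_delete A i i)) m)"
    by (simp add: pderiv_char_poly[OF A] coeff_sum)
  also have "\<dots> = (\<Sum>i < Suc (Suc m). - (mat_trace A - A $$ (i,i)))" by (simp add: minor)
  also have "\<dots> = of_nat (Suc m) * (- mat_trace A)"
    using A by (simp add: sum_subtractf sum_negf mat_trace_def algebra_simps)
  finally show ?case using mult_left_cancel[OF of_nat_neq_0[of m]] by blast
qed

lemma sum_lap_eigenvalues:
  assumes wf: "wf_graph G"
  shows "sum_list (lap_eigenvalues G) = 2 * real (num_edges G)"
proof -
  have "sum_list (lap_eigenvalues G) = mat_trace (laplacian G)"
  proof (cases "fst G")
    case 0
    then show ?thesis using length_lap_eigenvalues[OF wf] unfolding mat_trace_def by simp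
  next
    case (Suc m)
    then obtain x xs where xs: "lap_eigenvalues G = x # xs" "length xs = m"
      using length_lap_eigenvalues[OF wf] by (cases "lap_eigenvalues G") auto
    have "- mat_trace (laplacian G) = coeff (char_poly (laplacian G)) m"
      by (rule coeff_char_poly_mat_trace[symmetric]) (use Suc laplacian_carrier[of G] in simp)
    also have "\<dots> = - sum_list (lap_eigenvalues G)"
      unfolding char_poly_laplacian[OF wf] xs(1) using coeff_lin_factors_sum[of x xs] xs(2) by simp
    finally show ?thesis by simp
  qed
  also have "\<dots> = real (\<Sum>i<fst G. gdegree G i)"
    unfolding mat_trace_def by (simp add: laplacian_index)
  finally show ?thesis using sum_gdegree[OF wf] by simp
qed

lemma lap_eigsum_0 [simp]: "lap_eigsum G 0 = 0"
  unfolding lap_eigsum_def by simp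

lemma lap_eigsum_all:
  assumes "wf_graph G" "fst G \<le> k"
  shows "lap_eigsum G k = 2 * real (num_edges G)"
  unfolding lap_eigsum_def using sum_lap_eigenvalues length_lap_eigenvalues assms by simp

lemma lap_eigsum_mono:
  assumes "wf_graph G" "k \<le> k'"
  shows "lap_eigsum G k \<le> lap_eigsum G k'"
proof -
  have "take k' (lap_eigenvalues G) = take k (lap_eigenvalues G) @ take (k' - k) (drop k (lap_eigenvalues G))"
    using assms(2) by (metis le_add_diff_inverse take_add)
  moreover have "sum_list (take (k' - k) (drop k (lap_eigenvalues G))) \<ge> 0"
    using lap_eigenvalues_nonneg[OF assms(1)] by (intro sum_list_nonneg) (meson in_set_dropD in_set_takeD)
  ultimately show ?thesis unfolding lap_eigsum_def by simp
qed

lemma lap_eigsum_le_edges: "wf_graph G \<Longrightarrow> lap_eigsum G k \<le> 2 * real (num_edges G)"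
  using lap_eigsum_mono[of G k "max k (fst G)"] lap_eigsum_all[of G "max k (fst G)"] by simp

section \<open>Isomorphic graphs\<close>

lemma similar_mat_permute:
  fixes A B :: "'a::comm_ring_1 mat"
  assumes A: "A \<in> carrier_mat n n" and B: "B \<in> carrier_mat n n"
    and p: "bij_betw p {..<n} {..<n}"
    and AB: "\<And>i j. i < n \<Longrightarrow> j < n \<Longrightarrow> A $$ (i,j) = B $$ (p i, p j)"
  shows "similar_mat A B"
proof -
  have p_less: "p i < n" if "i < n" for i using p that by (auto simp: bij_betw_def)
  have p_eq: "p i = p j \<longleftrightarrow> i = j" if "i < n" "j < n" for i j
    using p that by (auto simp: bij_betw_def inj_on_def)
  have p_onto: "\<exists>k<n. p k = i" if "i < n" for i
    using p that by (metis bij_betw_imp_surj_on imageE lessThan_iff)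
  have mult: "(X * Y) $$ (i,j) = (\<Sum>k<n. X $$ (i,k) * Y $$ (k,j))"
    if "X \<in> carrier_mat n n" "Y \<in> carrier_mat n n" "i < n" "j < n" for X Y :: "'a mat" and i j
    using that by (simp add: scalar_prod_def row_def col_def lessThan_atLeast0)
  define P :: "'a mat" where "P = mat n n (\<lambda>(i,k). if k = p i then 1 else 0)"
  define Q :: "'a mat" where "Q = mat n n (\<lambda>(k,i). if k = p i then 1 else 0)"
  have P: "P \<in> carrier_mat n n" and Q: "Q \<in> carrier_mat n n" unfolding P_def Q_def by auto
  have PX: "(P * X) $$ (i,j) = X $$ (p i, j)" if "X \<in> carrier_mat n n" "i < n" "j < n" for X i j
  proof -
    have "(P * X) $$ (i,j) = (\<Sum>k<n. if k = p i then X $$ (k,j) else 0)"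
      unfolding mult[OF P that] by (intro sum.cong refl) (use that in \<open>auto simp: P_def\<close>)
    then show ?thesis using p_less[OF that(2)] by simp
  qed
  have XQ: "(X * Q) $$ (i,j) = X $$ (i, p j)" if "X \<in> carrier_mat n n" "i < n" "j < n" for X i j
  proof -
    have "(X * Q) $$ (i,j) = (\<Sum>k<n. if k = p j then X $$ (i,k) else 0)"
      unfolding mult[OF that(1) Q that(2,3)] by (intro sum.cong refl) (use that in \<open>auto simp: Q_def\<close>)
    then show ?thesis using p_less[OF that(3)] by simp
  qed
  have PQ: "P * Q = 1\<^sub>m n"
  proof (rule eq_matI)
    fix i j assume "i < dim_row (1\<^sub>m n)" "j < dim_col (1\<^sub>m n)"
    then have i: "i < n" and j: "j < n" by auto
    then show "(P * Q) $$ (i,j) = 1\<^sub>m n $$ (i,j)"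
      using PX[OF Q i j] p_less p_eq by (simp add: Q_def)
  qed (use P Q in auto)
  have QP: "Q * P = 1\<^sub>m n"
  proof (rule eq_matI)
    fix i j assume "i < dim_row (1\<^sub>m n)" "j < dim_col (1\<^sub>m n)"
    then have i: "i < n" and j: "j < n" by auto
    obtain k where k: "k < n" "p k = i" using p_onto[OF i] by blast
    have "(Q * P) $$ (i,j) = (\<Sum>l<n. if l = k then (if j = i then 1 else 0) else 0)"
      unfolding mult[OF Q P i j] by (intro sum.cong refl) (use i j k p_eq in \<open>auto simp: P_def Q_def\<close>)
    then show "(Q * P) $$ (i,j) = 1\<^sub>m n $$ (i,j)" using i j k by auto
  qed (use P Q in auto)
  have "A = P * B * Q"
  proof (rule eq_matI)
    fix i j assume "i < dim_row (P * B * Q)" "j < dim_col (P * B * Q)"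
    then have i: "i < n" and j: "j < n" using P Q by auto
    have "P * B \<in> carrier_mat n n" using P B by auto
    then show "A $$ (i,j) = (P * B * Q) $$ (i,j)"
      using XQ[OF _ i j] PX[OF B i p_less[OF j]] AB[OF i j] by simp
  qed (use A P Q in auto)
  with A B P Q show ?thesis by (intro similar_matI[OF _ PQ QP]) auto
qed

lemma lap_eigenvalues_iso:
  assumes wfG: "wf_graph G" and wfT: "wf_graph T" and n: "fst T = fst G"
    and p: "bij_betw p {..<fst G} {..<fst G}"
    and e: "\<forall>i<fst G. \<forall>j<fst G. snd G i j \<longleftrightarrow> snd T (p i) (p j)"
  shows "lap_eigenvalues G = lap_eigenvalues T"
proof -
  let ?n = "fst G"
  have p_less: "p i < ?n" if "i < ?n" for i using p that by (auto simp: bij_betw_def)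
  have p_eq: "p i = p j \<longleftrightarrow> i = j" if "i < ?n" "j < ?n" for i j
    using p that by (auto simp: bij_betw_def inj_on_def)
  have "gdegree G i = gdegree T (p i)" if i: "i < ?n" for i
  proof -
    have "{j. j < fst T \<and> snd T (p i) j} = p ` {j. j < ?n \<and> snd G i j}"
    proof (intro Set.set_eqI iffI)
      fix x assume "x \<in> {j. j < fst T \<and> snd T (p i) j}"
      moreover obtain k where "k < ?n" "p k = x"
        using calculation p n by (metis (mono_tags) bij_betw_imp_surj_on imageE lessThan_iff mem_Collect_eq)
      ultimately show "x \<in> p ` {j. j < ?n \<and> snd G i j}" using e i by auto
    qed (use e i p_less n in auto)
    moreover have "inj_on p {j. j < ?n \<and> snd G i j}" using p by (auto simp: bij_betw_def inj_on_def)
    ultimately show ?thesis unfolding gdegree_def by (simp add: card_image)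
  qed
  then have "laplacian G $$ (i,j) = laplacian T $$ (p i, p j)" if "i < ?n" "j < ?n" for i j
    using that p_less p_eq e n by (auto simp: laplacian_index)
  then have "similar_mat (laplacian G) (laplacian T)"
    using n p by (intro similar_mat_permute[of _ ?n]) auto
  then have "char_poly (laplacian G) = lin_factors (lap_eigenvalues T)"
    using char_poly_similar char_poly_laplacian[OF wfT] by metis
  then show ?thesis using lap_eigenvalues_eqI[OF wfG sorted_lap_eigenvalues[OF wfT]] by simp
qed

section \<open>Disjoint unions\<close>

lemma fst_disjoint_union [simp]: "fst (disjoint_union G H) = fst G + fst H"
  unfolding disjoint_union_def by simp

lemma wf_disjoint_union:
  assumes "wf_graph G" "wf_graph H"
  shows "wf_graph (disjoint_union G H)"
  unfolding wf_graph_def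
proof (intro allI impI)
  fix i j assume e: "snd (disjoint_union G H) i j"
  show "i < fst (disjoint_union G H) \<and> j < fst (disjoint_union G H) \<and> i \<noteq> j \<and> snd (disjoint_union G H) j i"
  proof (cases "i < fst G \<and> j < fst G \<and> snd G i j")
    case True
    then show ?thesis using assms(1) unfolding wf_graph_def disjoint_union_def by auto
  next
    case False
    then have h: "fst G \<le> i" "fst G \<le> j" "snd H (i - fst G) (j - fst G)"
      using e unfolding disjoint_union_def by auto
    then have "i - fst G < fst H" "j - fst G < fst H" "i - fst G \<noteq> j - fst G" "snd H (j - fst G) (i - fst G)"
      using assms(2) unfolding wf_graph_def by blast+
    then show ?thesis using h unfolding disjoint_union_def by auto
  qed
qed

lemma gdegree_disjoint_union_left:
  assumes "wf_graph G" "i < fst G"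
  shows "gdegree (disjoint_union G H) i = gdegree G i"
proof -
  have "{j. j < fst (disjoint_union G H) \<and> snd (disjoint_union G H) i j} = {j. j < fst G \<and> snd G i j}"
    using assms unfolding disjoint_union_def wf_graph_def by auto
  then show ?thesis unfolding gdegree_def by simp
qed

lemma gdegree_disjoint_union_right:
  assumes "wf_graph H" "fst G \<le> i"
  shows "gdegree (disjoint_union G H) i = gdegree H (i - fst G)"
proof -
  have "{j. j < fst (disjoint_union G H) \<and> snd (disjoint_union G H) i j}
      = (\<lambda>j. j + fst G) ` {j. j < fst H \<and> snd H (i - fst G) j}"
  proof (intro Set.set_eqI iffI)
    fix x assume "x \<in> {j. j < fst (disjoint_union G H) \<and> snd (disjoint_union G H) i j}"
    then have x: "fst G \<le> x" "snd H (i - fst G) (x - fst G)"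
      using assms(2) unfolding disjoint_union_def by auto
    then have "x - fst G < fst H" using assms(1) wf_graph_nodes by blast
    then show "x \<in> (\<lambda>j. j + fst G) ` {j. j < fst H \<and> snd H (i - fst G) j}"
      using x by (auto intro!: image_eqI[of _ _ "x - fst G"])
  qed (use assms(2) in \<open>auto simp: disjoint_union_def\<close>)
  then show ?thesis unfolding gdegree_def by (simp add: card_image)
qed

lemma laplacian_disjoint_union:
  assumes G: "wf_graph G" and H: "wf_graph H"
  shows "laplacian (disjoint_union G H)
    = four_block_mat (laplacian G) (0\<^sub>m (fst G) (fst H)) (0\<^sub>m (fst H) (fst G)) (laplacian H)"
    (is "_ = ?B")
proof (rule eq_matI)
  fix i j assume "i < dim_row ?B" "j < dim_col ?B"
  then have i: "i < fst G + fst H" and j: "j < fst G + fst H" by auto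
  let ?U = "disjoint_union G H"
  have "snd ?U i j = (if i < fst G \<and> j < fst G then snd G i j
      else if fst G \<le> i \<and> fst G \<le> j then snd H (i - fst G) (j - fst G) else False)"
    using G unfolding disjoint_union_def by (auto dest: wf_graph_nodes)
  then show "laplacian ?U $$ (i, j) = ?B $$ (i, j)"
    using i j by (auto simp: laplacian_index gdegree_disjoint_union_left[OF G]
        gdegree_disjoint_union_right[OF H])
qed auto

lemma char_poly_block_diag:
  fixes A :: "'a::idom mat"
  assumes A: "A \<in> carrier_mat n n" and D: "D \<in> carrier_mat m m"
  shows "char_poly (four_block_mat A (0\<^sub>m n m) (0\<^sub>m m n) D) = char_poly A * char_poly D"
proof -
  let ?cm = "\<lambda>A. [:0, 1:] \<cdot>\<^sub>m 1\<^sub>m (dim_row A) + map_mat (\<lambda>a. [:- a:]) A"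
  have "?cm (four_block_mat A (0\<^sub>m n m) (0\<^sub>m m n) D) = four_block_mat (?cm A) (0\<^sub>m n m) (0\<^sub>m m n) (?cm D)"
    by (rule eq_matI) (use A D in auto)
  moreover have "det \<dots> = det (?cm A) * det (?cm D)"
    by (rule det_four_block_mat_lower_left_zero) (use A D in auto)
  ultimately show ?thesis unfolding char_poly_defs by simp
qed

lemma lap_eigenvalues_disjoint_union:
  assumes G: "wf_graph G" and H: "wf_graph H"
  shows "lap_eigenvalues (disjoint_union G H) = rev (sort (lap_eigenvalues G @ lap_eigenvalues H))"
proof (rule lap_eigenvalues_eqI[OF wf_disjoint_union[OF G H]])
  show "sorted_wrt (\<ge>) (rev (sort (lap_eigenvalues G @ lap_eigenvalues H)))"
    by (simp add: sorted_wrt_rev)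
  have "char_poly (laplacian (disjoint_union G H)) = char_poly (laplacian G) * char_poly (laplacian H)"
    unfolding laplacian_disjoint_union[OF G H] by (rule char_poly_block_diag) auto
  also have "\<dots> = lin_factors (lap_eigenvalues G @ lap_eigenvalues H)"
    using char_poly_laplacian[OF G] char_poly_laplacian[OF H] by simp
  also have "\<dots> = lin_factors (rev (sort (lap_eigenvalues G @ lap_eigenvalues H)))"
    by (rule lin_factors_mset_cong) simp
  finally show "char_poly (laplacian (disjoint_union G H))
    = lin_factors (rev (sort (lap_eigenvalues G @ lap_eigenvalues H)))" .
qed

lemma num_edges_disjoint_union:
  assumes G: "wf_graph G" and H: "wf_graph H"
  shows "num_edges (disjoint_union G H) = num_edges G + num_edges H"
proof -
  have "2 * real (num_edges (disjoint_union G H)) = sum_list (lap_eigenvalues G) + sum_list (lap_eigenvalues H)"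
    using sum_lap_eigenvalues[OF wf_disjoint_union[OF G H]]
    unfolding lap_eigenvalues_disjoint_union[OF G H] by (simp add: sum_mset_sum_list[symmetric])
  then show ?thesis using sum_lap_eigenvalues[OF G] sum_lap_eigenvalues[OF H] by simp
qed

lemma sum_take_le_sum_take_Cons:
  fixes xs :: "'a::linordered_ab_group_add list"
  assumes "sorted_wrt (\<ge>) (x # xs)" "m \<le> length xs"
  shows "sum_list (take m xs) \<le> sum_list (take m (x # xs))"
proof (cases m)
  case (Suc m')
  then have "take m xs = take m' xs @ [xs ! m']" "xs ! m' \<le> x"
    using assms by (auto simp: take_Suc_conv_app_nth)
  then show ?thesis using Suc by simp
qed simp

lemma sum_mset_le_sum_take:
  fixes xs :: "'a::linordered_ab_group_add list"
  assumes "sorted_wrt (\<ge>) xs" "A \<subseteq># mset xs"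
  shows "sum_mset A \<le> sum_list (take (size A) xs)"
  using assms
proof (induction xs arbitrary: A)
  case (Cons x xs)
  show ?case
  proof (cases "x \<in># A")
    case True
    then obtain A' where A: "A = add_mset x A'" by (metis insert_DiffM)
    then have "sum_mset A' \<le> sum_list (take (size A') xs)"
      using Cons by simp
    then show ?thesis unfolding A by simp
  next
    case False
    then have A: "A \<subseteq># mset xs" using Cons.prems(2)
      by (simp add: inter_add_left1 subset_mset.inf.absorb_iff2)
    then have "sum_mset A \<le> sum_list (take (size A) xs)" using Cons by simp
    also have "\<dots> \<le> sum_list (take (size A) (x # xs))"
      using Cons.prems(1) size_mset_mono[OF A] by (intro sum_take_le_sum_take_Cons) auto
    finally show ?thesis .
  qed
qed simp

lemma sum_take_merge_le:
  fixes xs ys :: "'a::linordered_ab_group_add list"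
  assumes "sorted_wrt (\<ge>) xs" "sorted_wrt (\<ge>) ys" and k: "k \<le> length xs + length ys"
  obtains k1 k2 where "k1 \<le> length xs" "k2 \<le> length ys" "k1 + k2 = k"
    "sum_list (take k (rev (sort (xs @ ys)))) \<le> sum_list (take k1 xs) + sum_list (take k2 ys)"
proof -
  define C where "C = mset (take k (rev (sort (xs @ ys))))"
  have "C \<subseteq># mset xs + mset ys"
    unfolding C_def by (metis append_take_drop_id mset_append mset_rev mset_sort mset_subset_eq_add_left)
  define A where "A = C \<inter># mset xs"
  define B where "B = C - A"
  have A: "A \<subseteq># mset xs" unfolding A_def by simp
  have B: "B \<subseteq># mset ys" unfolding B_def A_def using \<open>C \<subseteq># mset xs + mset ys\<close>
    by (metis diff_intersect_left_idem subset_eq_diff_conv add.commute)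
  have "A \<subseteq># C" unfolding A_def by simp
  then have CAB: "C = A + B" unfolding B_def by (metis subset_mset.add_diff_inverse)
  show ?thesis
  proof (rule that)
    show "size A \<le> length xs" "size B \<le> length ys"
      using size_mset_mono[OF A] size_mset_mono[OF B] by simp_all
    show "size A + size B = k" using CAB k unfolding C_def by (metis size_mset length_take length_rev
        length_sort length_append min.absorb2 size_union)
    have "sum_list (take k (rev (sort (xs @ ys)))) = sum_mset A + sum_mset B"
      by (metis C_def CAB sum_mset.union sum_mset_sum_list)
    then show "sum_list (take k (rev (sort (xs @ ys)))) \<le> sum_list (take (size A) xs) + sum_list (take (size B) ys)"
      using add_mono[OF sum_mset_le_sum_take[OF assms(1) A] sum_mset_le_sum_take[OF assms(2) B]] by simp
  qed
qed

lemma lap_eigsum_disjoint_union_le: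
  assumes G: "wf_graph G" and H: "wf_graph H" and k: "k \<le> fst G + fst H"
  obtains k1 k2 where "k1 \<le> fst G" "k2 \<le> fst H" "k1 + k2 = k"
    "lap_eigsum (disjoint_union G H) k \<le> lap_eigsum G k1 + lap_eigsum H k2"
  using sum_take_merge_le[OF sorted_lap_eigenvalues[OF G] sorted_lap_eigenvalues[OF H], of k] k
  unfolding lap_eigsum_def lap_eigenvalues_disjoint_union[OF G H]
    length_lap_eigenvalues[OF G] length_lap_eigenvalues[OF H]
  by blast

section \<open>Complements\<close>

lemma fst_complement [simp]: "fst (complement G) = fst G"
  unfolding complement_def by simp

lemma wf_complement: "wf_graph G \<Longrightarrow> wf_graph (complement G)"
  unfolding wf_graph_def complement_def by auto

lemma gdegree_le:
  assumes wf: "wf_graph G" and i: "i < fst G"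
  shows "gdegree G i \<le> fst G - 1"
proof -
  have "{j. j < fst G \<and> snd G i j} \<subseteq> {..<fst G} - {i}" using wf_graph_irrefl[OF wf] by auto
  then have "gdegree G i \<le> card ({..<fst G} - {i})" unfolding gdegree_def by (intro card_mono) auto
  then show ?thesis using i by simp
qed

lemma gdegree_complement:
  assumes wf: "wf_graph G" and i: "i < fst G"
  shows "gdegree (complement G) i = fst G - 1 - gdegree G i"
proof -
  have "{j. j < fst G \<and> snd (complement G) i j} = ({..<fst G} - {i}) - {j. j < fst G \<and> snd G i j}"
    using i unfolding complement_def by auto
  moreover have "{j. j < fst G \<and> snd G i j} \<subseteq> {..<fst G} - {i}" using wf_graph_irrefl[OF wf] by auto
  ultimately show ?thesis using i unfolding gdegree_def by (simp add: card_Diff_subset)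
qed

lemma laplacian_complement_index:
  assumes wf: "wf_graph G" and i: "i < fst G" and j: "j < fst G"
  shows "laplacian (complement G) $$ (i,j) = (if i = j then real (fst G) else 0) - 1 - laplacian G $$ (i,j)"
proof -
  have "real (gdegree (complement G) i) = real (fst G) - 1 - real (gdegree G i)"
    using gdegree_complement[OF wf i] gdegree_le[OF wf i] i by (simp add: of_nat_diff)
  then show ?thesis using i j laplacian_index[of i "complement G" j] unfolding complement_def
    by (auto simp: laplacian_index)
qed

text \<open>Subtracting the first row from the others and adding all columns to the first one turns a
  matrix with zero row sums into one whose first column vanishes; what remains after deleting the
  first row and column is \<open>reduced_mat A\<close>.\<close>

definition reduced_mat :: "'a::comm_ring_1 mat \<Rightarrow> 'a mat" where
  "reduced_mat A = mat (dim_row A - 1) (dim_row A - 1) (\<lambda>(i,j). A $$ (Suc i, Suc j) - A $$ (0, Suc j))"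

lemma char_poly_reduced_mat:
  fixes A :: "'a::idom mat"
  assumes A: "A \<in> carrier_mat (Suc m) (Suc m)"
    and row_sums: "\<And>i. i < Suc m \<Longrightarrow> (\<Sum>j<Suc m. A $$ (i,j)) = 0"
  shows "char_poly A = [:0,1:] * char_poly (reduced_mat A)"
proof -
  define n where "n = Suc m"
  define P :: "'a mat" where "P = mat n n (\<lambda>(i,j). if j = 0 \<or> i = j then 1 else 0)"
  define Q :: "'a mat" where "Q = mat n n (\<lambda>(i,j). if i = j then 1 else if j = 0 then -1 else 0)"
  have A': "A \<in> carrier_mat n n" using A n_def by simp
  have P: "P \<in> carrier_mat n n" and Q: "Q \<in> carrier_mat n n" unfolding P_def Q_def by auto
  have n0: "0 < n" unfolding n_def by simp
  have mult: "(X * Y) $$ (i,j) = (\<Sum>k<n. X $$ (i,k) * Y $$ (k,j))"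
    if "X \<in> carrier_mat n n" "Y \<in> carrier_mat n n" "i < n" "j < n" for X Y :: "'a mat" and i j
    using that by (simp add: scalar_prod_def row_def col_def lessThan_atLeast0)
  have PQ: "P * Q = 1\<^sub>m n"
  proof (rule eq_matI)
    fix i j assume "i < dim_row (1\<^sub>m n)" "j < dim_col (1\<^sub>m n)"
    then have i: "i < n" and j: "j < n" by auto
    have "(P * Q) $$ (i,j) = (\<Sum>k<n. (if k = j then (if i = j then 1 else 0) else 0)
       + (if k = 0 then (if j = 0 \<and> i \<noteq> 0 then 1 else 0) else 0)
       + (if k = i then (if j = 0 \<and> i \<noteq> 0 then -1 else 0) else 0))"
      unfolding mult[OF P Q i j] by (intro sum.cong refl) (use i j in \<open>auto simp: P_def Q_def\<close>)
    then show "(P * Q) $$ (i,j) = 1\<^sub>m n $$ (i,j)" using i j n0 by (simp add: sum.distrib)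
  qed (use P Q in auto)
  have QP: "Q * P = 1\<^sub>m n"
  proof (rule eq_matI)
    fix i j assume "i < dim_row (1\<^sub>m n)" "j < dim_col (1\<^sub>m n)"
    then have i: "i < n" and j: "j < n" by auto
    have "(Q * P) $$ (i,j) = (\<Sum>k<n. (if k = i then (if j = 0 \<or> i = j then 1 else 0) else 0)
       + (if k = 0 then (if i \<noteq> 0 \<and> j = 0 then -1 else 0) else 0))"
      unfolding mult[OF Q P i j] by (intro sum.cong refl) (use i j in \<open>auto simp: P_def Q_def\<close>)
    then show "(Q * P) $$ (i,j) = 1\<^sub>m n $$ (i,j)" using i j n0 by (auto simp: sum.distrib)
  qed (use P Q in auto)
  have AP: "A * P \<in> carrier_mat n n" using A' P by auto
  have AP_index: "(A * P) $$ (i,j) = (if j = 0 then 0 else A $$ (i,j))" if i: "i < n" and j: "j < n" for i j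
  proof -
    have "(A * P) $$ (i,j) = (\<Sum>k<n. if j = 0 then A $$ (i,k) else (if k = j then A $$ (i,k) else 0))"
      unfolding mult[OF A' P i j] by (intro sum.cong refl) (use j in \<open>auto simp: P_def\<close>)
    then show ?thesis using row_sums[of i] i j n_def by simp
  qed
  define C where "C = Q * A * P"
  have C: "C \<in> carrier_mat n n" unfolding C_def using P Q A' by auto
  have C_index: "C $$ (i,j) = (if i = 0 then (A * P) $$ (0,j) else (A * P) $$ (i,j) - (A * P) $$ (0,j))"
    if i: "i < n" and j: "j < n" for i j
  proof -
    have "C $$ (i,j) = (Q * (A * P)) $$ (i,j)"
      unfolding C_def using Q A' P by (simp add: assoc_mult_mat[of _ n n _ n _ n])
    also have "\<dots> = (\<Sum>k<n. (if k = i then (A * P) $$ (k,j) else 0)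
        - (if k = 0 then (if i \<noteq> 0 then (A * P) $$ (0,j) else 0) else 0))"
      unfolding mult[OF Q AP i j] by (intro sum.cong refl) (use i in \<open>auto simp: Q_def\<close>)
    finally show ?thesis using i n0 by (simp add: sum_subtractf)
  qed
  have "A = P * C * Q"
  proof -
    have "P * C * Q = (P * Q) * A * (P * Q)" unfolding C_def using P Q A'
      by (simp add: assoc_mult_mat[of _ n n _ n _ n])
    then show ?thesis unfolding PQ using A' by simp
  qed
  then have "similar_mat A C" using A' C P Q by (intro similar_matI[OF _ PQ QP]) auto
  then have "char_poly A = char_poly C" by (rule char_poly_similar)
  also have "\<dots> = monom 1 1 * char_poly (mat_delete C 0 0)"
    by (rule char_poly_0_column[OF _ C n0]) (use C_index AP_index n0 in simp)
  also have "mat_delete C 0 0 = reduced_mat A"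
  proof (rule eq_matI)
    fix i j assume "i < dim_row (reduced_mat A)" "j < dim_col (reduced_mat A)"
    then have i: "i < m" and j: "j < m" using A unfolding reduced_mat_def by auto
    then show "mat_delete C 0 0 $$ (i, j) = reduced_mat A $$ (i, j)"
      using A C C_index[of "Suc i" "Suc j"] AP_index[of "Suc i" "Suc j"] AP_index[of 0 "Suc j"] n_def
      unfolding reduced_mat_def mat_delete_def by simp
  qed (use C A n_def in \<open>auto simp: reduced_mat_def\<close>)
  finally show ?thesis by (simp add: monom_altdef)
qed

lemma reduced_mat_laplacian_complement:
  assumes wf: "wf_graph G" and n: "fst G = Suc m"
  shows "reduced_mat (laplacian (complement G)) = real (fst G) \<cdot>\<^sub>m 1\<^sub>m m - reduced_mat (laplacian G)"
  by (rule eq_matI)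
    (use n laplacian_complement_index[OF wf] in \<open>auto simp: reduced_mat_def\<close>)

lemma char_poly_scalar_minus:
  fixes B :: "'a::idom mat"
  assumes B: "B \<in> carrier_mat m m" and cp: "char_poly B = lin_factors bs"
  shows "char_poly (c \<cdot>\<^sub>m 1\<^sub>m m - B) = lin_factors (map (\<lambda>b. c - b) bs)"
proof -
  define h where "h = (\<lambda>p :: 'a poly. pcompose p [:c, -1:])"
  interpret h: comm_ring_hom h
    by unfold_locales (simp_all add: h_def pcompose_add pcompose_mult pcompose_1)
  have lb: "length bs = m" using degree_lin_factors[of bs] cp degree_monic_char_poly[OF B] by simp
  have "map_mat h (char_poly_matrix B) = (-1) \<cdot>\<^sub>m char_poly_matrix (c \<cdot>\<^sub>m 1\<^sub>m m - B)"
    by (rule eq_matI) (use B in \<open>auto simp: char_poly_matrix_def h_def pcompose_pCons one_pCons\<close>)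
  then have "h (char_poly B) = det ((-1) \<cdot>\<^sub>m char_poly_matrix (c \<cdot>\<^sub>m 1\<^sub>m m - B))"
    unfolding char_poly_def by (metis h.hom_det)
  also have "\<dots> = (-1)^m * char_poly (c \<cdot>\<^sub>m 1\<^sub>m m - B)"
    using B by (simp add: char_poly_def char_poly_matrix_def)
  finally have lhs: "h (char_poly B) = (-1)^m * char_poly (c \<cdot>\<^sub>m 1\<^sub>m m - B)" .
  have "h (lin_factors xs) = (-1)^length xs * lin_factors (map (\<lambda>b. c - b) xs)" for xs
  proof (induction xs)
    case (Cons b xs)
    have "h [:- b, 1:] = (-1) * [:- (c - b), 1:]" by (simp add: h_def pcompose_pCons)
    then have "h (lin_factors (b # xs))
        = ((-1) * [:- (c - b), 1:]) * ((-1)^length xs * lin_factors (map (\<lambda>b. c - b) xs))"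
      by (simp add: h.hom_mult Cons.IH del: mult_pCons_left)
    then show ?case by (simp only: list.map prod_list.Cons length_Cons power_Suc mult_ac)
  qed (simp add: h_def)
  then have "h (char_poly B) = (-1)^m * lin_factors (map (\<lambda>b. c - b) bs)" using cp lb by simp
  with lhs show ?thesis by simp
qed

lemma sorted_desc_last_le:
  fixes xs :: "'a::linorder list"
  assumes "sorted_wrt (\<ge>) xs" "x \<in> set xs"
  shows "last xs \<le> x"
  using assms
proof (induction xs)
  case (Cons a xs)
  then show ?case by (cases "xs = []") (auto intro: order.trans[OF _ Cons.IH])
qed simp

lemma
  assumes wf: "wf_graph G" and n: "fst G = Suc m"
  shows lap_eigenvalues_snoc_0: "lap_eigenvalues G = butlast (lap_eigenvalues G) @ [0]"
    and char_poly_reduced_laplacian: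
      "char_poly (reduced_mat (laplacian G)) = lin_factors (butlast (lap_eigenvalues G))"
proof -
  let ?xs = "lap_eigenvalues G"
  have cp: "char_poly (laplacian G) = [:0,1:] * char_poly (reduced_mat (laplacian G))"
    by (rule char_poly_reduced_mat) (use n laplacian_row_sum[OF wf] in auto)
  then have "poly (lin_factors ?xs) 0 = 0" using char_poly_laplacian[OF wf] by simp
  then have "0 \<in> set ?xs" by (auto simp: poly_prod_list_zero_iff)
  moreover have "?xs \<noteq> []" using \<open>0 \<in> set ?xs\<close> by auto
  ultimately have "last ?xs = 0"
    using sorted_desc_last_le[OF sorted_lap_eigenvalues[OF wf]] lap_eigenvalues_nonneg[OF wf, of "last ?xs"]
    by (simp add: antisym)
  then show xs: "?xs = butlast ?xs @ [0]" using \<open>0 \<in> set ?xs\<close> by (metis append_butlast_last_id empty_iff list.set(1))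
  have "lin_factors ?xs = [:0,1:] * lin_factors (butlast ?xs)"
    by (subst xs) (simp add: mult.commute)
  then have "[:0,1:] * char_poly (reduced_mat (laplacian G)) = [:0,1:] * lin_factors (butlast ?xs)"
    using cp char_poly_laplacian[OF wf] by simp
  then show "char_poly (reduced_mat (laplacian G)) = lin_factors (butlast ?xs)"
    by (subst (asm) mult_left_cancel) simp_all
qed

lemma sum_butlast_lap_eigenvalues:
  assumes wf: "wf_graph G" and n: "fst G = Suc m"
  shows "sum_list (butlast (lap_eigenvalues G)) = 2 * real (num_edges G)"
proof -
  have "sum_list (lap_eigenvalues G) = sum_list (butlast (lap_eigenvalues G))"
    by (subst lap_eigenvalues_snoc_0[OF wf n]) simp
  then show ?thesis using sum_lap_eigenvalues[OF wf] by simp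
qed

lemma lap_eigenvalues_complement:
  assumes wf: "wf_graph G" and n: "fst G = Suc m"
  shows "lap_eigenvalues (complement G)
    = map (\<lambda>a. real (fst G) - a) (rev (butlast (lap_eigenvalues G))) @ [0]"
proof -
  let ?bs = "butlast (lap_eigenvalues G)" and ?c = "real (fst G)"
  define ys where "ys = map (\<lambda>a. ?c - a) (rev ?bs) @ [0]"
  have wfc: "wf_graph (complement G)" by (rule wf_complement[OF wf])
  have B: "reduced_mat (laplacian G) \<in> carrier_mat m m" unfolding reduced_mat_def using n by simp
  have "char_poly (laplacian (complement G)) = [:0,1:] * char_poly (reduced_mat (laplacian (complement G)))"
    by (rule char_poly_reduced_mat) (use n laplacian_row_sum[OF wfc] in auto)
  also have "char_poly (reduced_mat (laplacian (complement G))) = lin_factors (map (\<lambda>b. ?c - b) ?bs)"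
    unfolding reduced_mat_laplacian_complement[OF wf n]
    by (rule char_poly_scalar_minus[OF B char_poly_reduced_laplacian[OF wf n]])
  also have "[:0,1:] * \<dots> = lin_factors (0 # map (\<lambda>b. ?c - b) ?bs)" by simp
  also have "\<dots> = lin_factors ys"
    unfolding ys_def by (rule lin_factors_mset_cong) (simp add: rev_map)
  finally have cp: "char_poly (laplacian (complement G)) = lin_factors ys" .
  then have "mset (lap_eigenvalues (complement G)) = mset ys"
    using char_poly_laplacian[OF wfc] lin_factors_eq_iff_mset by metis
  then have "a \<ge> 0" if "a \<in> set ys" for a
    using lap_eigenvalues_nonneg[OF wfc] that by (metis set_mset_mset)
  moreover have "sorted_wrt (\<ge>) ?bs"
    using sorted_lap_eigenvalues[OF wf] by (metis lap_eigenvalues_snoc_0[OF wf n] sorted_wrt_append)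
  ultimately have "sorted_wrt (\<ge>) ys"
    unfolding ys_def by (auto simp: sorted_wrt_append sorted_wrt_map sorted_wrt_rev)
  then show ?thesis using lap_eigenvalues_eqI[OF wfc _ cp] unfolding ys_def by simp
qed

lemma lap_eigenvalues_le_nodes:
  assumes wf: "wf_graph G" and a: "a \<in> set (lap_eigenvalues G)"
  shows "a \<le> real (fst G)"
proof (cases "fst G")
  case 0
  then show ?thesis using a length_lap_eigenvalues[OF wf] by simp
next
  case (Suc m)
  have "a \<in> set (butlast (lap_eigenvalues G)) \<or> a = 0"
    using a by (subst (asm) lap_eigenvalues_snoc_0[OF wf Suc]) auto
  moreover have "real (fst G) - b \<ge> 0" if "b \<in> set (butlast (lap_eigenvalues G))" for b
    using lap_eigenvalues_nonneg[OF wf_complement[OF wf], of "real (fst G) - b"] that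
    unfolding lap_eigenvalues_complement[OF wf Suc] by auto
  ultimately show ?thesis by auto
qed

lemma lap_eigsum_le_nodes:
  assumes "wf_graph G"
  shows "lap_eigsum G k \<le> real k * real (fst G)"
proof -
  have "sum_list (take k xs) \<le> real k * c" if "\<forall>a\<in>set xs. a \<le> c" "c \<ge> 0" for xs :: "real list" and c
    using that
  proof (induction xs arbitrary: k)
    case (Cons x xs)
    then show ?case by (cases k) (auto simp: algebra_simps add_mono)
  qed simp
  then show ?thesis unfolding lap_eigsum_def using lap_eigenvalues_le_nodes[OF assms] by simp
qed

lemma lap_eigsum_complement:
  assumes wf: "wf_graph G" and n: "fst G = Suc m" and k: "k \<le> m"
  shows "lap_eigsum (complement G) k = real k * real (Suc m) - 2 * real (num_edges G) + lap_eigsum G (m - k)"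
proof -
  let ?xs = "lap_eigenvalues G" and ?bs = "butlast (lap_eigenvalues G)" and ?c = "real (Suc m)"
  have l: "length ?bs = m" using length_lap_eigenvalues[OF wf] n by simp
  have "take k (lap_eigenvalues (complement G)) = map (\<lambda>a. ?c - a) (take k (rev ?bs))"
    unfolding lap_eigenvalues_complement[OF wf n] using k l n by (simp add: take_map)
  then have "lap_eigsum (complement G) k = real k * ?c - sum_list (take k (rev ?bs))"
    unfolding lap_eigsum_def using k l by (simp add: sum_list_subtractf sum_list_triv)
  also have "take k (rev ?bs) = rev (drop (m - k) ?bs)" using l by (simp add: take_rev)
  also have "sum_list (rev (drop (m - k) ?bs)) = sum_list ?bs - sum_list (take (m - k) ?bs)"
    using sum_list_append[of "take (m - k) ?bs" "drop (m - k) ?bs"] by simp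
  also have "sum_list ?bs = 2 * real (num_edges G)" by (rule sum_butlast_lap_eigenvalues[OF wf n])
  also have "take (m - k) ?bs = take (m - k) ?xs" using l by (subst (2) lap_eigenvalues_snoc_0[OF wf n]) simp
  finally show ?thesis unfolding lap_eigsum_def by simp
qed

lemma num_edges_complement:
  assumes wf: "wf_graph G"
  shows "2 * real (num_edges (complement G)) = real (fst G) * (real (fst G) - 1) - 2 * real (num_edges G)"
proof (cases "fst G")
  case 0
  then have "num_edges G = 0" "num_edges (complement G) = 0" unfolding num_edges_def by auto
  then show ?thesis using 0 by simp
next
  case (Suc m)
  let ?bs = "butlast (lap_eigenvalues G)"
  have l: "length ?bs = m" using length_lap_eigenvalues[OF wf] Suc by simp
  have "2 * real (num_edges (complement G)) = sum_list (map (\<lambda>a. real (fst G) - a) (rev ?bs))"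
    using sum_lap_eigenvalues[OF wf_complement[OF wf]] unfolding lap_eigenvalues_complement[OF wf Suc] by simp
  also have "\<dots> = real m * real (fst G) - sum_list ?bs"
    using l by (simp add: sum_list_subtractf sum_list_triv)
  finally show ?thesis using sum_butlast_lap_eigenvalues[OF wf Suc] Suc by (simp add: algebra_simps)
qed

lemma num_edges_le:
  assumes wf: "wf_graph G"
  shows "2 * num_edges G \<le> fst G * (fst G - 1)"
proof -
  have "2 * real (num_edges G) \<le> real (fst G) * (real (fst G) - 1)"
    using num_edges_complement[OF wf] by (smt (verit) of_nat_0_le_iff)
  also have "real (fst G) * (real (fst G) - 1) = real (fst G * (fst G - 1))"
    by (cases "fst G") (simp_all add: algebra_simps)
  finally show ?thesis by linarith
qed

section \<open>Threshold graphs\<close>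

definition K1 :: graph where
  "K1 = (1, \<lambda>_ _. False)"

definition cone :: "graph \<Rightarrow> graph" where
  "cone G = (Suc (fst G), \<lambda>i j. snd G i j \<or> (i = fst G \<and> j < fst G) \<or> (j = fst G \<and> i < fst G))"

lemma fst_K1 [simp]: "fst K1 = 1"
  unfolding K1_def by simp

lemma wf_K1: "wf_graph K1"
  unfolding K1_def wf_graph_def by simp

lemma num_edges_K1: "num_edges K1 = 0"
  unfolding K1_def num_edges_def by simp

lemma disjoint_union_K1: "wf_graph (n, E) \<Longrightarrow> disjoint_union (n, E) K1 = (Suc n, E)"
  unfolding disjoint_union_def K1_def wf_graph_def by (auto simp: fun_eq_iff)

lemma cone_eq_complement:
  assumes "wf_graph G"
  shows "cone G = complement (disjoint_union (complement G) K1)"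
proof -
  obtain n E where G: "G = (n, E)" by fastforce
  show ?thesis using assms unfolding G cone_def disjoint_union_def K1_def wf_graph_def complement_def
    by (auto simp: fun_eq_iff; meson less_SucI)
qed

lemma wf_cone: "wf_graph G \<Longrightarrow> wf_graph (cone G)"
  by (simp add: cone_eq_complement wf_complement wf_disjoint_union wf_K1)

lemma lap_eigenvalues_disjoint_union_K1:
  assumes wf: "wf_graph G"
  shows "lap_eigenvalues (disjoint_union G K1) = lap_eigenvalues G @ [0]"
proof -
  have "lap_eigenvalues K1 = [0]"
  proof -
    obtain a where "lap_eigenvalues K1 = [a]"
      using length_lap_eigenvalues[OF wf_K1] by (auto simp: length_Suc_conv)
    then show ?thesis using sum_lap_eigenvalues[OF wf_K1] num_edges_K1 by simp
  qed
  then have "lap_eigenvalues (disjoint_union G K1) = rev (sort (lap_eigenvalues G @ [0]))"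
    using lap_eigenvalues_disjoint_union[OF wf wf_K1] by simp
  also have "\<dots> = lap_eigenvalues G @ [0]"
  proof (rule sorted_desc_mset_unique)
    show "sorted_wrt (\<ge>) (lap_eigenvalues G @ [0])"
      using sorted_lap_eigenvalues[OF wf] lap_eigenvalues_nonneg[OF wf] by (simp add: sorted_wrt_append)
  qed (simp_all add: sorted_wrt_rev)
  finally show ?thesis .
qed

lemma lap_eigsum_disjoint_union_K1:
  assumes "wf_graph G"
  shows "lap_eigsum (disjoint_union G K1) k = lap_eigsum G k"
proof -
  have "sum_list (take j [0::real]) = 0" for j by (cases j) auto
  then show ?thesis unfolding lap_eigsum_def lap_eigenvalues_disjoint_union_K1[OF assms]
    by (simp add: take_append)
qed

lemma num_edges_disjoint_union_K1: "wf_graph G \<Longrightarrow> num_edges (disjoint_union G K1) = num_edges G"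
  using num_edges_disjoint_union[OF _ wf_K1] num_edges_K1 by simp

lemma
  assumes "wf_graph (n, E)"
  shows lap_eigsum_add_isolated: "lap_eigsum (Suc n, E) k = lap_eigsum (n, E) k"
    and num_edges_add_isolated: "num_edges (Suc n, E) = num_edges (n, E)"
  using lap_eigsum_disjoint_union_K1[OF assms] num_edges_disjoint_union_K1[OF assms]
  unfolding disjoint_union_K1[OF assms] by simp_all

lemma num_edges_cone:
  assumes wf: "wf_graph G"
  shows "num_edges (cone G) = num_edges G + fst G"
proof -
  let ?U = "disjoint_union (complement G) K1"
  have U: "wf_graph ?U" by (simp add: wf_complement[OF wf] wf_disjoint_union wf_K1)
  have "num_edges ?U = num_edges (complement G)"
    by (rule num_edges_disjoint_union_K1[OF wf_complement[OF wf]])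
  then have "2 * real (num_edges (cone G)) = 2 * real (fst G) + 2 * real (num_edges G)"
    using num_edges_complement[OF U] num_edges_complement[OF wf]
    unfolding cone_eq_complement[OF wf] by (simp add: algebra_simps)
  then show ?thesis by linarith
qed

text \<open>By the complement description, the spectrum of the cone consists of \<open>n + 1\<close>, the values
  \<open>\<lambda> + 1\<close> for all but the last eigenvalue \<open>\<lambda>\<close> of \<open>G\<close>, and \<open>0\<close>.\<close>

lemma lap_eigsum_cone:
  assumes wf: "wf_graph G" and k: "1 \<le> k" "k \<le> fst G"
  shows "lap_eigsum (cone G) k = real (fst G + k) + lap_eigsum G (k - 1)"
proof -
  let ?n = "fst G" and ?U = "disjoint_union (complement G) K1"
  obtain m where n: "?n = Suc m" using k by (cases "fst G") auto
  have U: "wf_graph ?U" by (simp add: wf_complement[OF wf] wf_disjoint_union wf_K1)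
  have eU: "num_edges ?U = num_edges (complement G)"
    by (rule num_edges_disjoint_union_K1[OF wf_complement[OF wf]])
  have "lap_eigsum (cone G) k = real k * real (Suc ?n) - 2 * real (num_edges ?U) + lap_eigsum ?U (?n - k)"
    unfolding cone_eq_complement[OF wf] by (rule lap_eigsum_complement[OF U]) (use k in simp_all)
  also have "lap_eigsum ?U (?n - k) = lap_eigsum (complement G) (?n - k)"
    by (rule lap_eigsum_disjoint_union_K1[OF wf_complement[OF wf]])
  also have "\<dots> = real (?n - k) * real ?n - 2 * real (num_edges G) + lap_eigsum G (m - (?n - k))"
    using lap_eigsum_complement[OF wf n, of "?n - k"] n k by simp
  also have "m - (?n - k) = k - 1" using n k by simp
  finally show ?thesis
    using eU num_edges_complement[OF wf] k by (simp add: of_nat_diff algebra_simps)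
qed

lemma wf_threshold_canon: "threshold_canon T \<Longrightarrow> wf_graph T"
proof (induction rule: threshold_canon.induct)
  case (add_isolated n E)
  then show ?case unfolding wf_graph_def by fastforce
next
  case (add_dominating n E)
  then show ?case using wf_cone[of "(n, E)"] by (simp add: cone_def)
qed (simp add: wf_graph_def)

lemma threshold_canon_complement: "threshold_canon T \<Longrightarrow> threshold_canon (complement T)"
proof (induction rule: threshold_canon.induct)
  case empty
  have "complement (0, \<lambda>_ _. False) = (0, \<lambda>_ _. False)" unfolding complement_def by auto
  then show ?case using threshold_canon.empty by simp
next
  case (add_isolated n E)
  have "complement (Suc n, E)
      = (Suc n, \<lambda>i j. snd (complement (n, E)) i j \<or> (i = n \<and> j < n) \<or> (j = n \<and> i < n))"
    using wf_threshold_canon[OF add_isolated.hyps] unfolding complement_def wf_graph_def by (auto simp: fun_eq_iff)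
  moreover have "complement (n, E) = (n, snd (complement (n, E)))" unfolding complement_def by simp
  ultimately show ?case using threshold_canon.add_dominating[of n "snd (complement (n, E))"] add_isolated.IH by simp
next
  case (add_dominating n E)
  have "complement (Suc n, \<lambda>i j. E i j \<or> (i = n \<and> j < n) \<or> (j = n \<and> i < n)) = (Suc n, snd (complement (n, E)))"
    using wf_threshold_canon[OF add_dominating.hyps] unfolding complement_def wf_graph_def by (auto simp: fun_eq_iff)
  moreover have "complement (n, E) = (n, snd (complement (n, E)))" unfolding complement_def by simp
  ultimately show ?case using threshold_canon.add_isolated[of n "snd (complement (n, E))"] add_dominating.IH by simp
qed

lemma is_threshold_threshold_canon: "threshold_canon T \<Longrightarrow> is_threshold T"
  unfolding is_threshold_def
  by (intro conjI wf_threshold_canon exI[of _ T] exI[of _ id]) auto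

lemma is_threshold_complement:
  assumes "is_threshold G"
  shows "is_threshold (complement G)"
proof -
  obtain T p where T: "threshold_canon T" "fst T = fst G" "bij_betw p {..<fst G} {..<fst G}"
      "\<forall>i<fst G. \<forall>j<fst G. snd G i j \<longleftrightarrow> snd T (p i) (p j)" and wf: "wf_graph G"
    using assms unfolding is_threshold_def by blast
  have "p i < fst G" "p i = p j \<longleftrightarrow> i = j" if "i < fst G" "j < fst G" for i j
    using T(3) that by (auto simp: bij_betw_def inj_on_def)
  then have "\<forall>i<fst G. \<forall>j<fst G. snd (complement G) i j \<longleftrightarrow> snd (complement T) (p i) (p j)"
    using T(2,4) unfolding complement_def by auto
  then show ?thesis unfolding is_threshold_def using wf_complement[OF wf] T(2,3) threshold_canon_complement[OF T(1)]
    by (intro conjI exI[of _ "complement T"] exI[of _ p]) auto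
qed

lemma is_threshold_obtains_canon:
  assumes "is_threshold G"
  obtains T where "threshold_canon T" "lap_eigenvalues T = lap_eigenvalues G" "num_edges T = num_edges G"
proof -
  obtain T p where T: "threshold_canon T" "fst T = fst G" "bij_betw p {..<fst G} {..<fst G}"
      "\<forall>i<fst G. \<forall>j<fst G. snd G i j \<longleftrightarrow> snd T (p i) (p j)" and wf: "wf_graph G"
    using assms unfolding is_threshold_def by blast
  have "lap_eigenvalues G = lap_eigenvalues T"
    by (rule lap_eigenvalues_iso[OF wf wf_threshold_canon[OF T(1)] T(2-4)])
  moreover from this have "num_edges T = num_edges G"
    using sum_lap_eigenvalues[OF wf] sum_lap_eigenvalues[OF wf_threshold_canon[OF T(1)]] by simp
  ultimately show ?thesis using that T(1) by simp
qed

lemma threshold_canon_brouwer: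
  assumes "threshold_canon T"
  shows "2 * lap_eigsum T k \<le> 2 * real (num_edges T) + real k * (real k + 1)"
  using assms
proof (induction arbitrary: k rule: threshold_canon.induct)
  case empty
  then show ?case
    using length_lap_eigenvalues[OF wf_threshold_canon[OF threshold_canon.empty]] by (simp add: lap_eigsum_def)
next
  case (add_isolated n E)
  then show ?case using lap_eigsum_add_isolated num_edges_add_isolated wf_threshold_canon by simp
next
  case (add_dominating n E)
  have wf: "wf_graph (n, E)" by (rule wf_threshold_canon[OF add_dominating.hyps])
  have C: "cone (n, E) = (Suc n, \<lambda>i j. E i j \<or> (i = n \<and> j < n) \<or> (j = n \<and> i < n))"
    by (simp add: cone_def)
  have edges: "num_edges (cone (n, E)) = num_edges (n, E) + n" using num_edges_cone[OF wf] by simp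
  consider "k = 0" | "1 \<le> k" "k \<le> n" | "n < k" by linarith
  then have "2 * lap_eigsum (cone (n, E)) k \<le> 2 * real (num_edges (cone (n, E))) + real k * (real k + 1)"
  proof cases
    case 2
    have "real (k - 1) * (real (k - 1) + 1) = real k * (real k + 1) - 2 * real k"
      using 2 by (simp add: of_nat_diff algebra_simps)
    then show ?thesis using lap_eigsum_cone[OF wf, of k] 2 add_dominating.IH[of "k - 1"] edges by simp
  next
    case 3
    have "2 * num_edges (cone (n, E)) \<le> Suc n * n" using num_edges_le[OF wf_cone[OF wf]] by (simp add: cone_def)
    also have "\<dots> \<le> k * (k + 1)" using 3 by (intro mult_le_mono) auto
    finally have "real (2 * num_edges (cone (n, E))) \<le> real (k * (k + 1))" by (simp only: of_nat_le_iff)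
    then have "2 * real (num_edges (cone (n, E))) \<le> real k * (real k + 1)" by (simp add: algebra_simps)
    then show ?thesis using lap_eigsum_le_edges[OF wf_cone[OF wf], of k] by linarith
  qed simp
  then show ?case unfolding C .
qed

lemma is_threshold_brouwer:
  assumes "is_threshold T"
  shows "2 * lap_eigsum T k \<le> 2 * real (num_edges T) + real k * (real k + 1)"
proof -
  obtain T' where "threshold_canon T'" "lap_eigenvalues T' = lap_eigenvalues T" "num_edges T' = num_edges T"
    using is_threshold_obtains_canon[OF assms] .
  then show ?thesis using threshold_canon_brouwer[of T' k] unfolding lap_eigsum_def by simp
qed

text \<open>Twice the minimum of the trace bound \<open>2m\<close>, Brouwer's bound \<open>m + k(k+1)/2\<close> and the
  bound \<open>kn\<close> on the sum of the \<open>k\<close> largest Laplacian eigenvalues of a graph with \<open>n\<close> nodes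
  and \<open>m\<close> edges.\<close>

definition eigsum_bound :: "nat \<Rightarrow> nat \<Rightarrow> nat \<Rightarrow> nat" where
  "eigsum_bound n m k = min (4 * m) (min (2 * m + k * (k + 1)) (2 * k * n))"

lemma even_less_imp_add_2_le: "even (a::nat) \<Longrightarrow> even b \<Longrightarrow> a < b \<Longrightarrow> a + 2 \<le> b"
  by (elim evenE) auto

lemma cone_step_edge_bound:
  fixes k N M :: nat
  assumes "1 \<le> k" "k < N" "N * (N - 1) + 2 \<le> 2 * M \<or> 2 * k * N + 2 \<le> 2 * M + k * (k + 1)"
  shows "k * (k - 1) + 2 * N \<le> 2 * M"
proof -
  obtain a where a: "k = Suc a" using assms(1) by (cases k) auto
  obtain b where b: "N = Suc (k + b)" using assms(2) less_imp_Suc_add by blast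
  have "k * (k - 1) + 2 * N \<le> N * (N - 1) + 2"
    unfolding a b by (simp add: algebra_simps)
  moreover have "k * (k - 1) + 2 * N + k * (k + 1) \<le> 2 * k * N + 2"
    unfolding a b by (simp add: algebra_simps)
  ultimately show ?thesis using assms(3) by linarith
qed

lemma nodes_le_edges_if_dense:
  fixes N M :: nat
  assumes "N * (N - 1) < 2 * M"
  shows "N \<le> M"
proof -
  have "N * (N - 1) + 2 \<le> 2 * M" using assms by (intro even_less_imp_add_2_le) auto
  moreover have "2 * N \<le> N * (N - 1) + 2"
  proof (cases N)
    case (Suc a)
    have "a \<le> a * a" by (cases a) auto
    then show ?thesis using Suc by (simp add: algebra_simps)
  qed simp
  ultimately show ?thesis by simp
qed

lemma eigsum_bound_dense:
  fixes k N M :: nat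
  assumes k: "1 \<le> k" "k \<le> N"
    and dense: "\<not> (2 * M \<le> N * (N - 1) \<and> eigsum_bound (Suc N) M k \<le> 2 * k * N)"
  shows "N \<le> M \<and> eigsum_bound (Suc N) M k + 2 * N \<le> 4 * M + 2 * k"
proof -
  let ?T = "eigsum_bound (Suc N) M k"
  have T: "?T \<le> 4 * M" "?T \<le> 2 * M + k * (k + 1)"
    unfolding eigsum_bound_def by auto
  show ?thesis
  proof (cases "k = N")
    case True
    have "N * (N - 1) < 2 * M"
    proof (rule ccontr)
      assume small: "\<not> N * (N - 1) < 2 * M"
      then have "?T > 2 * N * N" using dense True by auto
      moreover have "2 * N * N \<ge> 4 * M" using small by (cases N) auto
      ultimately show False using T(1) by linarith
    qed
    then show ?thesis using nodes_le_edges_if_dense T(1) True by auto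
  next
    case False
    then have "k < N" using k by simp
    have "N * (N - 1) + 2 \<le> 2 * M \<or> 2 * k * N + 2 \<le> 2 * M + k * (k + 1)"
    proof (cases "2 * M \<le> N * (N - 1)")
      case True
      then have "2 * k * N < 2 * M + k * (k + 1)" using dense T(2) by linarith
      then show ?thesis by (intro disjI2 even_less_imp_add_2_le) auto
    next
      case False
      then show ?thesis by (intro disjI1 even_less_imp_add_2_le) auto
    qed
    then have "k * (k - 1) + 2 * N \<le> 2 * M" by (rule cone_step_edge_bound[OF k(1) \<open>k < N\<close>])
    moreover have "k * (k + 1) = k * (k - 1) + 2 * k" using k by (cases k) auto
    ultimately show ?thesis using T(2) by linarith
  qed
qed

lemma eigsum_bound_step:
  fixes k N M :: nat
  assumes k: "1 \<le> k" "k \<le> N"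
  shows "(2 * M \<le> N * (N - 1) \<and> eigsum_bound (Suc N) M k \<le> eigsum_bound N M k)
       \<or> (N \<le> M \<and> eigsum_bound (Suc N) M k \<le> 2 * (N + k) + eigsum_bound N (M - N) (k - 1))"
proof (cases "2 * M \<le> N * (N - 1) \<and> eigsum_bound (Suc N) M k \<le> 2 * k * N")
  case True
  then show ?thesis unfolding eigsum_bound_def by auto
next
  case False
  let ?T = "eigsum_bound (Suc N) M k"
  have NM: "N \<le> M" and c: "?T + 2 * N \<le> 4 * M + 2 * k"
    using eigsum_bound_dense[OF k False] by auto
  obtain k' where k': "k = Suc k'" using k(1) by (cases k) auto
  obtain M' where M': "M = N + M'" using NM le_Suc_ex by blast
  have "?T \<le> 2 * M + k * (k + 1)" "?T \<le> 2 * k * Suc N" unfolding eigsum_bound_def by auto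
  then have "?T \<le> 2 * (N + k) + 4 * M'" "?T \<le> 2 * (N + k) + (2 * M' + k' * (k' + 1))"
    "?T \<le> 2 * (N + k) + 2 * k' * N"
    using c unfolding k' M' by (simp_all add: algebra_simps)
  then have "?T \<le> 2 * (N + k) + eigsum_bound N (M - N) (k - 1)"
    unfolding eigsum_bound_def[of N] min_add_distrib_right min.bounded_iff k' M' by simp
  then show ?thesis using NM by blast
qed

lemma cone_edges_admissible:
  fixes N M :: nat
  assumes "N \<le> M" "2 * M \<le> Suc N * N"
  shows "2 * (M - N) \<le> N * (N - 1)"
proof -
  have "Suc N * N = N * (N - 1) + 2 * N" by (cases N) auto
  then show ?thesis using assms by linarith
qed

lemma threshold_canon_with_num_edges:
  "2 * M \<le> N * (N - 1) \<Longrightarrow> \<exists>E. threshold_canon (N, E) \<and> num_edges (N, E) = M"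
proof (induction N arbitrary: M)
  case 0
  then show ?case using threshold_canon.empty by (auto simp: num_edges_def)
next
  case (Suc N)
  show ?case
  proof (cases "2 * M \<le> N * (N - 1)")
    case True
    then obtain E where E: "threshold_canon (N, E)" "num_edges (N, E) = M" using Suc.IH by blast
    then have "num_edges (Suc N, E) = M" using num_edges_add_isolated[OF wf_threshold_canon[OF E(1)]] by simp
    then show ?thesis using threshold_canon.add_isolated[OF E(1)] by blast
  next
    case False
    then have NM: "N \<le> M" using nodes_le_edges_if_dense[of N M] by simp
    have "2 * M \<le> Suc N * N" using Suc.prems by simp
    then obtain E where E: "threshold_canon (N, E)" "num_edges (N, E) = M - N"
      using Suc.IH[OF cone_edges_admissible[OF NM]] by blast
    have "num_edges (cone (N, E)) = M" using num_edges_cone[OF wf_threshold_canon[OF E(1)]] E(2) NM by simp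
    moreover have "threshold_canon (cone (N, E))" using threshold_canon.add_dominating[OF E(1)] by (simp add: cone_def)
    ultimately show ?thesis by (intro exI[of _ "snd (cone (N, E))"]) (simp add: cone_def)
  qed
qed

lemma threshold_canon_attains_eigsum_bound:
  "2 * M \<le> N * (N - 1) \<Longrightarrow> k \<le> N \<Longrightarrow>
    \<exists>E. threshold_canon (N, E) \<and> num_edges (N, E) = M \<and> real (eigsum_bound N M k) \<le> 2 * lap_eigsum (N, E) k"
proof (induction N arbitrary: M k)
  case 0
  then show ?case using threshold_canon.empty
    by (intro exI[of _ "\<lambda>_ _. False"]) (auto simp: num_edges_def eigsum_bound_def)
next
  case (Suc N)
  have M: "2 * M \<le> Suc N * N" using Suc.prems(1) by simp
  obtain E0 where E0: "threshold_canon (Suc N, E0)" "num_edges (Suc N, E0) = M"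
    using threshold_canon_with_num_edges[OF Suc.prems(1)] by blast
  consider "k = 0" | "k = Suc N" | "1 \<le> k" "k \<le> N" using Suc.prems(2) by linarith
  then show ?case
  proof cases
    case 1
    then show ?thesis using E0 by (intro exI[of _ E0]) (simp add: eigsum_bound_def)
  next
    case 2
    then have "lap_eigsum (Suc N, E0) k = 2 * real M"
      using lap_eigsum_all[OF wf_threshold_canon[OF E0(1)]] E0(2) by simp
    then show ?thesis using E0 by (intro exI[of _ E0]) (simp add: eigsum_bound_def)
  next
    case 3
    from eigsum_bound_step[OF 3, of M] show ?thesis
    proof (elim disjE conjE)
      assume M': "2 * M \<le> N * (N - 1)" and step: "eigsum_bound (Suc N) M k \<le> eigsum_bound N M k"
      obtain E where E: "threshold_canon (N, E)" "num_edges (N, E) = M"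
          "real (eigsum_bound N M k) \<le> 2 * lap_eigsum (N, E) k"
        using Suc.IH[OF M' 3(2)] by blast
      have wf: "wf_graph (N, E)" by (rule wf_threshold_canon[OF E(1)])
      show ?thesis
        using threshold_canon.add_isolated[OF E(1)] num_edges_add_isolated[OF wf] lap_eigsum_add_isolated[OF wf]
          E(2,3) of_nat_mono[where 'a = real, OF step]
        by (intro exI[of _ E]) auto
    next
      assume NM: "N \<le> M" and step: "eigsum_bound (Suc N) M k \<le> 2 * (N + k) + eigsum_bound N (M - N) (k - 1)"
      obtain E where E: "threshold_canon (N, E)" "num_edges (N, E) = M - N"
          "real (eigsum_bound N (M - N) (k - 1)) \<le> 2 * lap_eigsum (N, E) (k - 1)"
      proof -
        have "k - 1 \<le> N" using 3 by simp
        from Suc.IH[OF cone_edges_admissible[OF NM M] this] show ?thesis using that by blast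
      qed
      have wf: "wf_graph (N, E)" by (rule wf_threshold_canon[OF E(1)])
      have "threshold_canon (cone (N, E))" using threshold_canon.add_dominating[OF E(1)] by (simp add: cone_def)
      moreover have "num_edges (cone (N, E)) = M" using num_edges_cone[OF wf] E(2) NM by simp
      moreover have "real (eigsum_bound (Suc N) M k) \<le> 2 * lap_eigsum (cone (N, E)) k"
        using lap_eigsum_cone[OF wf, of k] 3 E(3) of_nat_mono[where 'a = real, OF step] by simp
      ultimately show ?thesis by (intro exI[of _ "snd (cone (N, E))"]) (simp add: cone_def)
    qed
  qed
qed

section \<open>Spectral threshold dominance\<close>

lemma threshold_dominated_brouwer:
  assumes "spectrally_threshold_dominated G" "k \<le> fst G"
  shows "2 * lap_eigsum G k \<le> 2 * real (num_edges G) + real k * (real k + 1)"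
proof (cases "k = 0")
  case False
  then obtain T where "is_threshold T" "num_edges T = num_edges G" "lap_eigsum T k \<ge> lap_eigsum G k"
    using assms unfolding spectrally_threshold_dominated_def by fastforce
  then show ?thesis using is_threshold_brouwer[of T k] by simp
qed simp

lemma threshold_dominated_disjoint_union:
  assumes G: "wf_graph G" "spectrally_threshold_dominated G"
    and H: "wf_graph H" "spectrally_threshold_dominated H"
  shows "spectrally_threshold_dominated (disjoint_union G H)"
  unfolding spectrally_threshold_dominated_def
proof
  fix k assume "k \<in> {1..fst (disjoint_union G H)}"
  then have k: "k \<le> fst G + fst H" by simp
  let ?U = "disjoint_union G H" and ?N = "fst G + fst H" and ?M = "num_edges G + num_edges H"
  obtain k1 k2 where kk: "k1 \<le> fst G" "k2 \<le> fst H" "k1 + k2 = k"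
     and split: "lap_eigsum ?U k \<le> lap_eigsum G k1 + lap_eigsum H k2"
    using lap_eigsum_disjoint_union_le[OF G(1) H(1) k] by blast
  have edges: "num_edges ?U = ?M" by (rule num_edges_disjoint_union[OF G(1) H(1)])
  have rk: "real k = real k1 + real k2" using kk(3) by simp
  have "real k1 * (real k1 + 1) + real k2 * (real k2 + 1) \<le> real k * (real k + 1)"
    unfolding rk by (simp add: algebra_simps)
  then have "2 * lap_eigsum ?U k \<le> 2 * (real (num_edges G) + real (num_edges H)) + real k * (real k + 1)"
    using split threshold_dominated_brouwer[OF G(2) kk(1)] threshold_dominated_brouwer[OF H(2) kk(2)]
    by (simp add: algebra_simps)
  moreover have "real k1 * real (fst G) + real k2 * real (fst H) \<le> real k * (real (fst G) + real (fst H))"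
    unfolding rk by (simp add: algebra_simps)
  then have "lap_eigsum ?U k \<le> real k * (real (fst G) + real (fst H))"
    using split lap_eigsum_le_nodes[OF G(1), of k1] lap_eigsum_le_nodes[OF H(1), of k2]
    by (simp add: algebra_simps)
  moreover have "lap_eigsum ?U k \<le> 2 * (real (num_edges G) + real (num_edges H))"
    using split lap_eigsum_le_edges[OF G(1), of k1] lap_eigsum_le_edges[OF H(1), of k2]
    by (simp add: algebra_simps)
  ultimately have "2 * lap_eigsum ?U k \<le> real (eigsum_bound ?N ?M k)"
    unfolding eigsum_bound_def by (simp add: of_nat_min algebra_simps)
  moreover have "2 * ?M \<le> ?N * (?N - 1)" using num_edges_le[OF wf_disjoint_union[OF G(1) H(1)]] edges by simp
  then obtain E where E: "threshold_canon (?N, E)" "num_edges (?N, E) = ?M"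
      "real (eigsum_bound ?N ?M k) \<le> 2 * lap_eigsum (?N, E) k"
    using threshold_canon_attains_eigsum_bound k by blast
  ultimately show "\<exists>T. is_threshold T \<and> fst T = fst ?U \<and> num_edges T = num_edges ?U \<and>
      lap_eigsum ?U k \<le> lap_eigsum T k"
    using edges is_threshold_threshold_canon[OF E(1)] E(2) by (intro exI[of _ "(?N, E)"]) auto
qed

lemma threshold_dominated_disjoint_union_list:
  assumes "\<forall>G \<in> set Gs. wf_graph G \<and> spectrally_threshold_dominated G"
  shows "wf_graph (disjoint_union_list Gs) \<and> spectrally_threshold_dominated (disjoint_union_list Gs)"
  using assms
proof (induction Gs)
  case Nil
  then show ?case unfolding disjoint_union_list_def wf_graph_def spectrally_threshold_dominated_def by simp
next
  case (Cons G Gs)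
  then show ?case unfolding disjoint_union_list_def
    using wf_disjoint_union threshold_dominated_disjoint_union by simp
qed

lemma threshold_dominated_complement:
  assumes wf: "wf_graph G" and dom: "spectrally_threshold_dominated G"
  shows "spectrally_threshold_dominated (complement G)"
  unfolding spectrally_threshold_dominated_def
proof
  fix k assume "k \<in> {1..fst (complement G)}"
  then have k: "1 \<le> k" "k \<le> fst G" by auto
  then obtain m where n: "fst G = Suc m" by (cases "fst G") auto
  define j where "j = (if k \<le> m then m - k else 0)"
  obtain T where T: "is_threshold T" "fst T = fst G" "num_edges T = num_edges G" "lap_eigsum G j \<le> lap_eigsum T j"
  proof (cases "j = 0")
    case True
    obtain T where "is_threshold T" "fst T = fst G" "num_edges T = num_edges G"
      using dom k unfolding spectrally_threshold_dominated_def by fastforce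
    then show ?thesis using that True by simp
  next
    case False
    then have "j \<in> {1..fst G}" using n unfolding j_def by auto
    then show ?thesis using that dom unfolding spectrally_threshold_dominated_def by blast
  qed
  have wfT: "wf_graph T" using T(1) unfolding is_threshold_def by simp
  have edges: "num_edges (complement T) = num_edges (complement G)"
    using num_edges_complement[OF wf] num_edges_complement[OF wfT] T(2,3) by simp
  have "lap_eigsum (complement G) k \<le> lap_eigsum (complement T) k"
  proof (cases "k \<le> m")
    case True
    then show ?thesis using lap_eigsum_complement[OF wf n True] lap_eigsum_complement[OF wfT _ True] T(2-4) n
      unfolding j_def by simp
  next
    case False
    then show ?thesis using lap_eigsum_all[OF wf_complement[OF wf], of k] lap_eigsum_all[OF wf_complement[OF wfT], of k]
      k n T(2) edges by simp
  qed
  then show "\<exists>T. is_threshold T \<and> fst T = fst (complement G) \<and> num_edges T = num_edges (complement G) \<and>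
      lap_eigsum (complement G) k \<le> lap_eigsum T k"
    using is_threshold_complement[OF T(1)] T(2) edges by (intro exI[of _ "complement T"]) auto
qed

theorem theorem3:
  shows "(\<forall>Gs. (\<forall>G \<in> set Gs. wf_graph G \<and> spectrally_threshold_dominated G) \<longrightarrow>
            spectrally_threshold_dominated (disjoint_union_list Gs))
       \<and> (\<forall>G. wf_graph G \<and> spectrally_threshold_dominated G \<longrightarrow>
            spectrally_threshold_dominated (complement G))"
  using threshold_dominated_disjoint_union_list threshold_dominated_complement by blast

end
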